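(* Let $m\ge7$ with $m\equiv3\pmod4$, let $N=3^m-1$ and $v=\frac{3^m-1}{2}+3^{(m-1)/2}-1$. Then $\gcd(v,N)=1$, and for every integer $i$ with $0\le i\le\frac{3^{(m-1)/2}+1}{4}$, the $3$-weight of $v(1+2i)\bmod N$ is congruent to $3$ modulo $4$ (i.e. the $3$-adic digit vector of $v(1+2i)\bmod N$ lies in $S_3(m)$).
   Context: For an integer $i$, $i\bmod N$ is the unique $s\in\{0,\dots,N-1\}$ with $N\mid i-s$. For $0\le s\le 3^m-1$ with $3$-adic expansion $s=\sum_{j=0}^{m-1}s_j3^j$, $s_j\in\{0,1,2\}$, the $3$-weight is $\mathrm{wt}_3(s)=\sum_j s_j$. $S_j(m)=\{(i_0,\dots,i_{m-1})\in\{0,1,2\}^m:\sum i_k\equiv j\pmod 4\}$. *)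

theory Defs
  imports Main
begin

definition wt3 :: "nat \<Rightarrow> nat \<Rightarrow> nat" where
  "wt3 m s = (\<Sum>j<m. (s div 3 ^ j) mod 3)"

end

theory Submission
  imports Defs
begin

(* Write m = 2k + 1, q = 3^k and c = (q - 1)/2, so that N = 3q^2 - 1 = 2H and v = H + (q - 1).
   Coprimality: v is odd, 2v = N + 4c and N = (3c + 3) 4c + 2, so gcd v N divides 2.
   Weights: for odd a the multiple H a is congruent to H modulo 2H, hence v a mod N = H + (q - 1) a.
   The number H has the base-q digits (c, c, 1), and adding (q - 1) a turns them into
   (c - a, c + a, 1) for a \<le> c, or into (q - 2, 0, 2) for a = c + 2.  In the first case the
   two lower blocks are complementary in base 3, so either way the 3-weight is 2k + 1 = m.
   Since k is odd, c is odd, and the odd multipliers a = 1 + 2i allowed by the hypothesis are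
   exactly those with a \<le> c or a = c + 2. *)

lemma wt3_Suc: "wt3 (Suc k) s = s mod 3 + wt3 k (s div 3)"
  unfolding wt3_def
  by (simp add: sum.lessThan_Suc_shift div_mult2_eq del: sum.lessThan_Suc)

lemma wt3_add_pow_mult:
  "y < 3 ^ k \<Longrightarrow> wt3 (k + n) (y + 3 ^ k * z) = wt3 k y + wt3 n z"
proof (induction k arbitrary: y)
  case 0
  then show ?case by (simp add: wt3_def)
next
  case (Suc k)
  have "(y + 3 ^ Suc k * z) mod 3 = y mod 3"
    by (metis mod_mult_self2 mult.assoc power_Suc)
  moreover have "(y + 3 ^ Suc k * z) div 3 = y div 3 + 3 ^ k * z"
    by simp
  moreover have "y div 3 < 3 ^ k"
    using Suc.prems by simp
  ultimately show ?case
    using Suc.IH by (simp add: wt3_Suc)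
qed

lemma wt3_complement:
  "x < 3 ^ k \<Longrightarrow> wt3 k (3 ^ k - 1 - x) + wt3 k x = 2 * k"
proof (induction k arbitrary: x)
  case 0
  then show ?case by (simp add: wt3_def)
next
  case (Suc k)
  define d e t where "d = x div 3" and "e = x mod 3" and "t = 3 ^ k - 1 - d"
  have "x = 3 * d + e" "e < 3" "d < 3 ^ k"
    using Suc.prems by (auto simp: d_def e_def)
  then have "3 ^ Suc k - 1 - x = (2 - e) + 3 * t"
    by (simp add: t_def)
  moreover have "((2 - e) + 3 * t) mod 3 = 2 - e" "((2 - e) + 3 * t) div 3 = t"
    by simp_all
  ultimately have "wt3 (Suc k) (3 ^ Suc k - 1 - x) = (2 - e) + wt3 k t"
    by (simp only: wt3_Suc)
  moreover have "wt3 (Suc k) x = e + wt3 k d"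
    by (simp add: wt3_Suc d_def e_def)
  ultimately show ?case
    using Suc.IH[OF \<open>d < 3 ^ k\<close>] \<open>e < 3\<close> by (simp add: t_def)
qed

lemma wt3_zero [simp]: "wt3 k 0 = 0"
  by (simp add: wt3_def)

lemma wt3_one: "0 < k \<Longrightarrow> wt3 k 1 = 1"
  by (cases k) (simp_all add: wt3_Suc)

lemma wt3_Suc_0 [simp]: "wt3 (Suc 0) z = z mod 3"
  by (simp add: wt3_def)

lemma three_pow_odd_mod_4: "odd k \<Longrightarrow> (3::nat) ^ k mod 4 = 3"
proof -
  assume "odd k"
  then obtain j where "k = Suc (2 * j)"
    by (metis oddE add.commute plus_1_eq_Suc)
  then have "(3::nat) ^ k mod 4 = 3 * (9 ^ j mod 4) mod 4"
    by (simp add: power_mult mod_mult_right_eq)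
  also have "(9::nat) ^ j mod 4 = 1"
    using power_mod[of "9::nat" 4 j] by simp
  finally show ?thesis by simp
qed

lemma half_three_sq_digits:
  assumes "q = 2 * c + (1::nat)"
  shows "(3 * q ^ 2 - 1) div 2 = c + q * c + q ^ 2"
proof -
  have "3 * q ^ 2 - 1 = 2 * (c + q * c + q ^ 2)"
    using assms by (simp add: algebra_simps power2_eq_square)
  then show ?thesis by simp
qed

lemma gcd_half_three_sq_plus_pred:
  assumes "odd (q::nat)"
  shows "gcd ((3 * q ^ 2 - 1) div 2 + q - 1) (3 * q ^ 2 - 1) = 1"
proof -
  obtain c where q: "q = 2 * c + 1"
    using assms oddE by blast
  define v N where "v = (3 * q ^ 2 - 1) div 2 + q - 1" and "N = 3 * q ^ 2 - 1"
  have v: "v = 6 * c ^ 2 + 8 * c + 1" and N: "N = 12 * c ^ 2 + 12 * c + 2"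
    using half_three_sq_digits[OF q] by (simp_all add: v_def N_def q algebra_simps power2_eq_square)
  define d where "d = gcd v N"
  have "d dvd 2 * v" "d dvd N"
    by (simp_all add: d_def)
  moreover have "2 * v = N + 4 * c"
    by (simp add: v N)
  ultimately have "d dvd 4 * c"
    by (metis dvd_add_right_iff)
  moreover have "N = (3 * c + 3) * (4 * c) + 2"
    by (simp add: N algebra_simps power2_eq_square)
  ultimately have "d dvd 2"
    using \<open>d dvd N\<close> by (metis dvd_add_right_iff dvd_mult)
  moreover have "odd d"
    using v by (simp add: d_def)
  ultimately have "d = 1"
    using dvd_imp_le[of d 2] by (auto simp: le_Suc_eq numeral_2_eq_2)
  then show ?thesis
    by (simp add: d_def v_def N_def)
qed

lemma odd_mult_mod_double:
  fixes h x a :: nat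
  assumes "odd a" "x * a < h"
  shows "((h + x) * a) mod (2 * h) = h + x * a"
proof -
  obtain b where "a = 2 * b + 1"
    using assms(1) oddE by blast
  then have "(h + x) * a = (h + x * a) + b * (2 * h)"
    by (simp add: algebra_simps)
  then show ?thesis
    using assms(2) by simp
qed

lemma pred_mult_lt_half_three_sq:
  fixes q a :: nat
  assumes "odd q" "2 * a \<le> q + 3"
  shows "(q - 1) * a < (3 * q ^ 2 - 1) div 2"
proof -
  obtain c where q: "q = 2 * c + 1"
    using assms(1) oddE by blast
  have "a \<le> c + 2"
    using assms(2) q by simp
  then have "(q - 1) * a \<le> 2 * c * (c + 2)"
    using mult_le_mono2[of a "c + 2" "2 * c"] q by simp
  also have "\<dots> < c + q * c + q ^ 2"
    by (simp add: q algebra_simps power2_eq_square)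
  finally show ?thesis
    by (simp only: half_three_sq_digits[OF q])
qed

lemma wt3_digits_low_case:
  assumes q: "3 ^ k = 2 * c + 1" and "a \<le> c"
  shows "wt3 (2 * k + 1) (c + 3 ^ k * c + (3 ^ k) ^ 2 + (3 ^ k - 1) * a) = 2 * k + 1"
proof -
  have "c + a < 3 ^ k" and low: "c - a = 3 ^ k - 1 - (c + a)"
    using q \<open>a \<le> c\<close> by simp_all
  have "c + 3 ^ k * c + (3 ^ k) ^ 2 + (3 ^ k - 1) * a
      = (c - a) + 3 ^ k * ((c + a) + 3 ^ k * 1)"
    using \<open>a \<le> c\<close> unfolding q by (auto simp: algebra_simps power2_eq_square dest!: le_Suc_ex)
  moreover have "2 * k + 1 = k + (k + 1)"
    by simp
  ultimately have "wt3 (2 * k + 1) (c + 3 ^ k * c + (3 ^ k) ^ 2 + (3 ^ k - 1) * a)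
      = wt3 k (c - a) + wt3 (k + 1) ((c + a) + 3 ^ k * 1)"
    using \<open>c + a < 3 ^ k\<close> by (simp only: wt3_add_pow_mult)
  also have "\<dots> = wt3 k (3 ^ k - 1 - (c + a)) + wt3 k (c + a) + 1"
    using wt3_add_pow_mult[OF \<open>c + a < 3 ^ k\<close>, of 1 1] low by simp
  also have "\<dots> = 2 * k + 1"
    using wt3_complement[OF \<open>c + a < 3 ^ k\<close>] by simp
  finally show ?thesis .
qed

lemma wt3_digits_boundary_case:
  assumes q: "3 ^ k = 2 * c + 1" and "0 < k"
  shows "wt3 (2 * k + 1) (c + 3 ^ k * c + (3 ^ k) ^ 2 + (3 ^ k - 1) * (c + 2)) = 2 * k + 1"
proof -
  have "(3::nat) ^ 1 \<le> 3 ^ k"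
    using \<open>0 < k\<close> by (intro power_increasing) simp_all
  then have "1 \<le> c" "1 < (3::nat) ^ k"
    using q by simp_all
  then have "c + 3 ^ k * c + (3 ^ k) ^ 2 + (3 ^ k - 1) * (c + 2)
      = (3 ^ k - 1 - 1) + 3 ^ k * (0 + 3 ^ k * 2)"
    unfolding q by (auto simp: algebra_simps power2_eq_square dest!: le_Suc_ex)
  moreover have "2 * k + 1 = k + (k + 1)"
    by simp
  moreover have "3 ^ k - 1 - 1 < (3::nat) ^ k"
    by simp
  ultimately have "wt3 (2 * k + 1) (c + 3 ^ k * c + (3 ^ k) ^ 2 + (3 ^ k - 1) * (c + 2))
      = wt3 k (3 ^ k - 1 - 1) + wt3 (k + 1) (0 + 3 ^ k * 2)"
    by (simp only: wt3_add_pow_mult)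
  also have "\<dots> = wt3 k (3 ^ k - 1 - 1) + 2"
    using wt3_add_pow_mult[of 0 k 1 2] by simp
  also have "\<dots> = 2 * k + 1"
    using wt3_complement[OF \<open>1 < 3 ^ k\<close>] wt3_one[OF \<open>0 < k\<close>] \<open>0 < k\<close> by simp
  finally show ?thesis .
qed

lemma wt3_half_three_sq_plus_odd_multiple:
  assumes "odd k" "odd a" "2 * a \<le> 3 ^ k + 3"
  shows "wt3 (2 * k + 1) ((3 * (3 ^ k) ^ 2 - 1) div 2 + (3 ^ k - 1) * a) = 2 * k + 1"
proof -
  define c where "c = ((3::nat) ^ k - 1) div 2"
  have "\<And>x::nat. x mod 4 = 3 \<Longrightarrow> x = 2 * ((x - 1) div 2) + 1 \<and> odd ((x - 1) div 2)"
    by presburger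
  from this[OF three_pow_odd_mod_4[OF \<open>odd k\<close>]]
  have q: "3 ^ k = 2 * c + 1" and "odd c"
    unfolding c_def by simp_all
  have "a \<le> c \<or> a = c + 2"
    using \<open>odd a\<close> \<open>odd c\<close> assms(3) unfolding q by presburger
  moreover have "0 < k"
    using \<open>odd k\<close> by (rule odd_pos)
  ultimately show ?thesis
    unfolding half_three_sq_digits[OF q]
    using wt3_digits_low_case[OF q] wt3_digits_boundary_case[OF q] by auto
qed

theorem lemma43:
  fixes m :: nat
  assumes "m \<ge> 7" and "m mod 4 = 3"
  defines "N \<equiv> 3 ^ m - 1"
      and "v \<equiv> (3 ^ m - 1) div 2 + 3 ^ ((m - 1) div 2) - 1"
  shows "gcd v N = 1 \<and>
    (\<forall>i::nat. 4 * i \<le> 3 ^ ((m - 1) div 2) + 1 \<longrightarrow>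
       wt3 m ((v * (1 + 2 * i)) mod N) mod 4 = 3)"
proof -
  define k where "k = (m - 1) div 2"
  have m: "m = 2 * k + 1" and "odd k"
    using assms(2) unfolding k_def by presburger+
  define H where "H = (3 * ((3::nat) ^ k) ^ 2 - 1) div 2"
  have "(3::nat) ^ m = 3 * (3 ^ k) ^ 2"
    unfolding m by (simp add: power_mult[symmetric] mult.commute)
  then have N: "N = 2 * H" and v: "v = H + (3 ^ k - 1)"
    unfolding N_def v_def H_def k_def[symmetric] by simp_all
  have "gcd v N = 1"
    using gcd_half_three_sq_plus_pred[of "3 ^ k"] unfolding N v H_def by simp
  moreover have "wt3 m ((v * (1 + 2 * i)) mod N) = m" if "4 * i \<le> 3 ^ k + 1" for i
  proof -
    define a where "a = 1 + 2 * i"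
    have "odd a" "2 * a \<le> 3 ^ k + 3"
      using that by (simp_all add: a_def)
    moreover have "(3 ^ k - 1) * a < H"
      using pred_mult_lt_half_three_sq[of "3 ^ k" a] \<open>2 * a \<le> 3 ^ k + 3\<close> by (simp add: H_def)
    ultimately have "(v * a) mod N = H + (3 ^ k - 1) * a"
      unfolding N v by (intro odd_mult_mod_double)
    then show ?thesis
      unfolding m a_def[symmetric] H_def
      using wt3_half_three_sq_plus_odd_multiple[OF \<open>odd k\<close> \<open>odd a\<close> \<open>2 * a \<le> 3 ^ k + 3\<close>] by simp
  qed
  ultimately show ?thesis
    using assms(2) unfolding k_def by simp
qed

end
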